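(* The vector $\Gamma:=\big(\widehat\zeta-\Lambda\widehat\zeta,\ \Lambda\widehat\zeta-\Lambda^2\widehat\zeta\big)$ satisfies $\mathbf L\Gamma=\Gamma$, i.e. it is an eigenfunction of $\mathbf L$ with eigenvalue $1$. Moreover $\Gamma=-\frac{d}{dT}\Phi^T_{LP}\big|_{T=0}$, where $\Phi^T_{LP}(z):=\big((T+1)^{-1}\widehat\zeta(z(T+1)),\ \widehat\mu(z(T+1))\big)$ and $\widehat\mu:=\Lambda\widehat\zeta-\widehat\zeta$.
   Context: LP profile: $(\widehat\rho,\widehat\omega)$ real-analytic, even, solving $\widehat\rho'=-\frac{2y\widehat\rho\widehat\omega(\widehat\rho-\widehat\omega)}{1-y^2\widehat\omega^2}$, $\widehat\omega'=\frac{1-3\widehat\omega}{y}+\frac{2y\widehat\omega^2(\widehat\rho-\widehat\omega)}{1-y^2\widehat\omega^2}$, $\widehat\omega(0)=\frac13$, $\widehat\rho(0)>\frac13$. $\widehat\zeta$: increasing solution of $z\widehat\zeta'=\widehat\zeta\,\widehat\omega(\widehat\zeta)$ with $z^{-1/3}\widehat\zeta(z)\to1$ as $z\to0$; $C_{LP}:=\frac23\widehat\rho(0)$, so that $(z^2-\widehat\zeta_z^{-2})\widehat\zeta_{zz}+C_{LP}z\widehat\zeta^{-2}-2\widehat\zeta^{-1}=0$. $\widehat\partial_z:=z^{2/3}\partial_z$, $\widehat D_zf:=\partial_z(z^{2/3}f)$, $\Lambda:=z\partial_z$, $\widehat G:=(\widehat\partial_z\widehat\zeta)^{-2}$, $K\theta:=\widehat\partial_z(\widehat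 G\widehat D_z\theta)$, $\mathcal V:=\frac29z^{-2/3}\widehat G-2\widehat\zeta^{-2}+\frac43z^{-1/3}(\widehat\partial_z^2\widehat\zeta)\widehat G^{3/2}+2C_{LP}z\widehat\zeta^{-3}$, and $\mathbf L(\theta,\phi):=(\phi-\Lambda\theta+\theta,\ -\Lambda\phi+K\theta+\mathcal V\theta)$ (acting on smooth functions on $(0,\infty)$). *)

theory Defs
  imports "HOL-Analysis.Analysis"
begin

definition real_analytic_on :: "(real \<Rightarrow> real) \<Rightarrow> real set \<Rightarrow> bool" where
  "real_analytic_on f S \<longleftrightarrow>
     (\<forall>x\<in>S. \<exists>r>0. \<exists>a::nat \<Rightarrow> real. \<forall>y. \<bar>y - x\<bar> < r \<longrightarrow> (\<lambda>n. a n * (y - x) ^ n) sums f y)"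

definition hatd :: "(real \<Rightarrow> real) \<Rightarrow> real \<Rightarrow> real" where
  "hatd f z = z powr (2/3) * deriv f z"

definition hatD :: "(real \<Rightarrow> real) \<Rightarrow> real \<Rightarrow> real" where
  "hatD f z = deriv (\<lambda>s. s powr (2/3) * f s) z"

definition Lam :: "(real \<Rightarrow> real) \<Rightarrow> real \<Rightarrow> real" where
  "Lam f z = z * deriv f z"

definition Ghat :: "(real \<Rightarrow> real) \<Rightarrow> real \<Rightarrow> real" where
  "Ghat zeta z = inverse ((hatd zeta z)^2)"

definition Kop :: "(real \<Rightarrow> real) \<Rightarrow> (real \<Rightarrow> real) \<Rightarrow> real \<Rightarrow> real" where
  "Kop zeta \<theta> = hatd (\<lambda>s. Ghat zeta s * hatD \<theta> s)"

definition Vpot :: "real \<Rightarrow> (real \<Rightarrow> real) \<Rightarrow> real \<Rightarrow> real" where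
  "Vpot C zeta z =
     2/9 * z powr (-2/3) * Ghat zeta z - 2 * (zeta z) powr (-2)
     + 4/3 * z powr (-1/3) * hatd (hatd zeta) z * (Ghat zeta z) powr (3/2)
     + 2 * C * z * (zeta z) powr (-3)"

definition Lop :: "real \<Rightarrow> (real \<Rightarrow> real) \<Rightarrow> (real \<Rightarrow> real) \<times> (real \<Rightarrow> real)
                     \<Rightarrow> (real \<Rightarrow> real) \<times> (real \<Rightarrow> real)" where
  "Lop C zeta p = (case p of (\<theta>, \<phi>) \<Rightarrow>
     ((\<lambda>z. \<phi> z - Lam \<theta> z + \<theta> z),
      (\<lambda>z. - Lam \<phi> z + Kop zeta \<theta> z + Vpot C zeta z * \<theta> z)))"

end

theory Submission
  imports Defs
begin

(* Gamma is the generator of the scaling symmetry zeta(z) -> zeta(lambda z) / lambda of the profile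
   equation E(zeta) := (z^2 - zeta_z^-2) zeta_zz + C_LP z zeta^-2 - 2 zeta^-1 = 0, which gives the
   second claim directly. The first component of L Gamma = Gamma is an identity; for the second, an
   explicit computation of K and V shows that the second component of L Gamma - Gamma equals
   z E(zeta)' + E(zeta).

   The profile equation comes from the LP system: (y^3 rho omega)' = y^2 rho yields the first integral
   zeta^3 rho(zeta) omega(zeta) = rho(0) z / 3 (fixed by zeta ~ z^(1/3) at 0), and the omega-equation
   at y = zeta(z) then becomes E(zeta) = 0. The LP system is only assumed off the singular set
   y = 0, y omega(y) = +-1; it extends to all y because, by the identity theorem for real-analytic
   functions, this set has empty interior. The hypothesis rho(0) > 1/3 is used only through
   rho(0) > 0, which makes zeta_z nonzero. *)

section \<open>Real-analytic functions\<close>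

lemma power_series_expansion_has_real_derivative:
  fixes f :: "real \<Rightarrow> real" and a :: "nat \<Rightarrow> real"
  assumes r: "r > 0" and f: "\<forall>y. \<bar>y - x\<bar> < r \<longrightarrow> (\<lambda>n. a n * (y - x)^n) sums f y"
    and y: "\<bar>y - x\<bar> < r"
  shows "(f has_real_derivative (\<Sum>n. diffs a n * (y - x)^n)) (at y)"
    and "(\<lambda>n. diffs a n * (y - x)^n) sums deriv f y"
proof -
  have summable: "summable (\<lambda>n. a n * t^n)" if "norm t < r" for t
    using f[rule_format, of "x + t"] that by (simp add: sums_summable)
  have "((\<lambda>t. \<Sum>n. a n * t^n) has_real_derivative (\<Sum>n. diffs a n * (y - x)^n)) (at (y - x))"
    by (rule termdiffs_strong'[OF summable]) (use y in auto)
  moreover have "((\<lambda>u. u - x) has_real_derivative 1) (at y)"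
    by (auto intro!: derivative_eq_intros)
  ultimately have "((\<lambda>u. \<Sum>n. a n * (u - x)^n) has_real_derivative (\<Sum>n. diffs a n * (y - x)^n)) (at y)"
    using DERIV_chain2 by fastforce
  then show deriv: "(f has_real_derivative (\<Sum>n. diffs a n * (y - x)^n)) (at y)"
  proof (rule has_field_derivative_transform_within_open[of _ _ _ "{x - r <..< x + r}"])
    fix u assume "u \<in> {x - r <..< x + r}"
    then have "\<bar>u - x\<bar> < r" by auto
    then show "(\<Sum>n. a n * (u - x)^n) = f u"
      using f sums_unique by metis
  qed (use y in \<open>auto simp: abs_less_iff\<close>)
  have "summable (\<lambda>n. diffs a n * (y - x)^n)"
    by (rule termdiff_converges[of _ r]) (use y summable in auto)
  then show "(\<lambda>n. diffs a n * (y - x)^n) sums deriv f y"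
    using DERIV_imp_deriv[OF deriv] summable_sums by metis
qed

lemma power_series_expansion_iterated_deriv:
  fixes f :: "real \<Rightarrow> real" and a :: "nat \<Rightarrow> real"
  assumes "r > 0" and "\<forall>y. \<bar>y - x\<bar> < r \<longrightarrow> (\<lambda>n. a n * (y - x)^n) sums f y"
  shows "\<forall>y. \<bar>y - x\<bar> < r \<longrightarrow> (\<lambda>k. (diffs ^^ n) a k * (y - x)^k) sums (deriv ^^ n) f y"
proof (induction n)
  case (Suc n)
  then show ?case using power_series_expansion_has_real_derivative(2)[OF assms(1)] by simp
qed (use assms in simp)

lemma diffs_funpow_at_0: "(diffs ^^ n) a 0 = fact n * (a n :: real)"
proof (induction n arbitrary: a)
  case (Suc n)
  have "(diffs ^^ Suc n) a 0 = (diffs ^^ n) (diffs a) 0"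
    by (simp only: funpow_Suc_right comp_def)
  also have "\<dots> = fact (Suc n) * a (Suc n)"
    by (simp add: Suc diffs_def)
  finally show ?case .
qed simp

lemma real_analytic_on_has_real_derivative:
  assumes "real_analytic_on f S" and "x \<in> S"
  shows "(f has_real_derivative deriv f x) (at x)"
proof -
  obtain r a where "r > 0" and "\<forall>y. \<bar>y - x\<bar> < r \<longrightarrow> (\<lambda>n. a n * (y - x)^n) sums f y"
    using assms unfolding real_analytic_on_def by blast
  from power_series_expansion_has_real_derivative(1)[OF this, of x] \<open>r > 0\<close> show ?thesis
    by (simp add: DERIV_imp_deriv)
qed

lemma real_analytic_on_iterated_deriv:
  assumes "real_analytic_on f S"
  shows "real_analytic_on ((deriv ^^ n) f) S"
  using assms power_series_expansion_iterated_deriv unfolding real_analytic_on_def by meson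

lemma real_analytic_on_deriv:
  assumes "real_analytic_on f S"
  shows "real_analytic_on (deriv f) S"
  using real_analytic_on_iterated_deriv[OF assms, of 1] by simp

lemma real_analytic_on_isCont:
  assumes "real_analytic_on f S" and "x \<in> S"
  shows "isCont f x"
  using real_analytic_on_has_real_derivative[OF assms] by (rule DERIV_isCont)

lemma real_analytic_on_continuous_on:
  assumes "real_analytic_on f S"
  shows "continuous_on S f"
  by (intro continuous_at_imp_continuous_on ballI real_analytic_on_isCont[OF assms])

lemma real_analytic_on_ident_mult_plus_const:
  assumes "real_analytic_on f S"
  shows "real_analytic_on (\<lambda>y. y * f y + e) S"
  unfolding real_analytic_on_def
proof
  fix x assume "x \<in> S"
  then obtain r a where r: "r > 0" and f: "\<forall>y. \<bar>y - x\<bar> < r \<longrightarrow> (\<lambda>n. a n * (y - x)^n) sums f y"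
    using assms unfolding real_analytic_on_def by blast
  define b where "b n = x * a n + (if n = 0 then e else a (n - 1))" for n
  have "(\<lambda>n. b n * (y - x)^n) sums (y * f y + e)" if y: "\<bar>y - x\<bar> < r" for y
  proof -
    have fy: "(\<lambda>n. a n * (y - x)^n) sums f y" using f y by auto
    have "(\<lambda>n. (y - x) * (a n * (y - x)^n)) sums ((y - x) * f y)"
      by (rule sums_mult[OF fy])
    then have "(\<lambda>n. (\<lambda>k. if k = 0 then e else a (k - 1) * (y - x)^k) (Suc n)) sums ((y - x) * f y)"
      by (simp add: algebra_simps)
    then have "(\<lambda>k. if k = 0 then e else a (k - 1) * (y - x)^k) sums ((y - x) * f y + e)"
      by (subst (asm) sums_Suc_iff) simp
    from sums_add[OF sums_mult[OF fy, of x] this]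
    have "(\<lambda>n. x * (a n * (y - x)^n) + (if n = 0 then e else a (n - 1) * (y - x)^n))
            sums (y * f y + e)"
      by (simp add: algebra_simps)
    moreover have "(\<lambda>n. x * (a n * (y - x)^n) + (if n = 0 then e else a (n - 1) * (y - x)^n))
            = (\<lambda>n. b n * (y - x)^n)"
      by (auto simp: b_def algebra_simps)
    ultimately show ?thesis by simp
  qed
  with r show "\<exists>r>0. \<exists>a. \<forall>y. \<bar>y - x\<bar> < r \<longrightarrow> (\<lambda>n. a n * (y - x)^n) sums (y * f y + e)"
    by blast
qed

text \<open>The set of points where all derivatives vanish is open (power series), closed (continuity)
  and nonempty.\<close>

lemma real_analytic_eq_0_if_eq_0_on_interval:
  fixes f :: "real \<Rightarrow> real"
  assumes f: "real_analytic_on f UNIV" and "u < v" and zero: "\<And>y. y \<in> {u<..<v} \<Longrightarrow> f y = 0"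
  shows "f x = 0"
proof -
  define T where "T = {x. \<forall>n. (deriv ^^ n) f x = 0}"
  have "closed T"
    unfolding T_def Collect_all_eq
    by (intro closed_INT ballI closed_Collect_eq continuous_on_const
          real_analytic_on_continuous_on[OF real_analytic_on_iterated_deriv[OF f]])
  moreover have "open T"
    unfolding open_dist
  proof
    fix x assume "x \<in> T"
    obtain r a where r: "r > 0" and fx: "\<forall>y. \<bar>y - x\<bar> < r \<longrightarrow> (\<lambda>n. a n * (y - x)^n) sums f y"
      using f unfolding real_analytic_on_def by blast
    note expansion = power_series_expansion_iterated_deriv[OF r fx, rule_format]
    have "a n = 0" for n
    proof -
      have "(\<lambda>k. (diffs ^^ n) a k * 0^k) sums (deriv ^^ n) f x"
        using expansion[of x n] r by simp
      then have "(diffs ^^ n) a 0 = (deriv ^^ n) f x"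
        using powser_sums_zero sums_unique2 by blast
      with \<open>x \<in> T\<close> show ?thesis by (simp add: T_def diffs_funpow_at_0)
    qed
    then have diffs_0: "(diffs ^^ n) a = (\<lambda>_. 0)" for n
      by (induction n) (auto simp: diffs_def)
    have "y \<in> T" if "dist y x < r" for y
      unfolding T_def
    proof (intro CollectI allI)
      fix n
      have "(\<lambda>k. 0) sums (deriv ^^ n) f y"
        using expansion[of y n] that by (simp add: diffs_0 dist_real_def)
      then show "(deriv ^^ n) f y = 0" using sums_zero sums_unique2 by blast
    qed
    with r show "\<exists>e>0. \<forall>y. dist y x < e \<longrightarrow> y \<in> T" by blast
  qed
  moreover have "(u + v) / 2 \<in> T"
  proof -
    have "\<forall>y\<in>{u<..<v}. (deriv ^^ n) f y = 0" for n
    proof (induction n)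
      case (Suc n)
      show ?case
      proof
        fix y assume y: "y \<in> {u<..<v}"
        have "((deriv ^^ n) f has_real_derivative 0) (at y)"
          by (rule has_field_derivative_transform_within_open[of "\<lambda>_. 0" 0 y "{u<..<v}"])
             (use y Suc in auto)
        then show "(deriv ^^ Suc n) f y = 0" by (simp add: DERIV_imp_deriv)
      qed
    qed (simp add: zero)
    with \<open>u < v\<close> show ?thesis by (auto simp: T_def)
  qed
  ultimately have "T = UNIV" using clopen[of T] by auto
  then have "(deriv ^^ 0) f x = 0" unfolding T_def by blast
  then show ?thesis by simp
qed

section \<open>The LP system\<close>

lemma LP_regular_point_in_interval:
  fixes omega :: "real \<Rightarrow> real"
  assumes omega: "real_analytic_on omega UNIV" and "u < v"
  shows "\<exists>y\<in>{u<..<v}. y \<noteq> 0 \<and> 1 - y\<^sup>2 * (omega y)\<^sup>2 \<noteq> 0"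
proof (rule ccontr)
  assume singular: "\<not> ?thesis"
  obtain u' v' where sub: "u \<le> u'" "u' < v'" "v' \<le> v" and nonzero: "0 \<notin> {u'<..<v'}"
  proof (cases "0 \<le> u")
    case True
    then show ?thesis using that[of u v] \<open>u < v\<close> by auto
  next
    case False
    then show ?thesis using that[of u "min v 0"] \<open>u < v\<close> by auto
  qed
  have sign: "y * omega y = 1 \<or> y * omega y = -1" if y: "y \<in> {u'<..<v'}" for y
  proof -
    have "y \<noteq> 0" using nonzero y by auto
    moreover have "y \<in> {u<..<v}" using sub y by auto
    ultimately have "(y * omega y)\<^sup>2 = 1"
      using singular by (auto simp: power_mult_distrib)
    then show ?thesis by (simp add: power2_eq_1_iff)
  qed
  \<comment> \<open>One sign persists on a subinterval, so the analytic function \<open>y * omega y \<mp> 1\<close>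
    vanishes identically, which fails at \<open>y = 0\<close>.\<close>
  show False
  proof (cases "\<forall>y\<in>{u'<..<v'}. y * omega y = 1")
    case True
    have "0 * omega 0 + (-1) = (0::real)"
      by (rule real_analytic_eq_0_if_eq_0_on_interval[OF real_analytic_on_ident_mult_plus_const[OF omega] sub(2)])
         (use True in auto)
    then show False by simp
  next
    case False
    then obtain c where c: "c \<in> {u'<..<v'}" "c * omega c - 1 \<noteq> 0" by auto
    have "isCont (\<lambda>y. y * omega y - 1) c"
      by (intro continuous_intros real_analytic_on_isCont[OF omega UNIV_I])
    from continuous_at_avoid[OF this c(2)]
    obtain e where e: "e > 0" "\<And>y. dist c y < e \<Longrightarrow> y * omega y - 1 \<noteq> 0"
      by blast
    have "0 * omega 0 + 1 = (0::real)"
    proof (rule real_analytic_eq_0_if_eq_0_on_interval[OF real_analytic_on_ident_mult_plus_const[OF omega]])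
      show "max u' (c - e) < min v' (c + e)" using c e by auto
      fix y assume "y \<in> {max u' (c - e)<..<min v' (c + e)}"
      then show "y * omega y + 1 = 0"
        using e(2)[of y] sign[of y]
        by (auto simp: dist_real_def abs_less_iff)
    qed
    then show False by simp
  qed
qed

lemma LP_regular_points_dense:
  fixes omega :: "real \<Rightarrow> real"
  assumes "real_analytic_on omega UNIV"
  shows "closure {y. y \<noteq> 0 \<and> 1 - y\<^sup>2 * (omega y)\<^sup>2 \<noteq> 0} = UNIV"
proof -
  have "\<exists>y \<in> {y. y \<noteq> 0 \<and> 1 - y\<^sup>2 * (omega y)\<^sup>2 \<noteq> 0}. dist y x < e" if e: "e > 0" for x e
  proof -
    obtain y where "y \<in> {x - e<..<x + e}" "y \<noteq> 0 \<and> 1 - y\<^sup>2 * (omega y)\<^sup>2 \<noteq> 0"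
      using LP_regular_point_in_interval[OF assms, of "x - e" "x + e"] e by auto
    then show ?thesis by (intro bexI[of _ y]) (auto simp: dist_real_def abs_less_iff)
  qed
  then show ?thesis by (auto simp: closure_approachable)
qed

lemma eq_if_eq_on_LP_regular_points:
  fixes omega F G :: "real \<Rightarrow> real"
  assumes "real_analytic_on omega UNIV" and "continuous_on UNIV (\<lambda>y. F y - G y)"
    and "\<And>y. y \<in> {y. y \<noteq> 0 \<and> 1 - y\<^sup>2 * (omega y)\<^sup>2 \<noteq> 0} \<Longrightarrow> F y = G y"
  shows "F y = G y"
proof -
  let ?R = "{y. y \<noteq> 0 \<and> 1 - y\<^sup>2 * (omega y)\<^sup>2 \<noteq> 0}"
  have "F y - G y = 0"
  proof (rule continuous_constant_on_closure[of ?R "\<lambda>y. F y - G y" 0 y])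
    show "continuous_on (closure ?R) (\<lambda>y. F y - G y)"
      unfolding LP_regular_points_dense[OF assms(1)] by (fact assms(2))
    show "y \<in> closure ?R"
      unfolding LP_regular_points_dense[OF assms(1)] ..
  qed (use assms(3) in simp)
  then show ?thesis by simp
qed

lemma LP_ode_cleared:
  fixes rho omega :: "real \<Rightarrow> real"
  assumes rho_an: "real_analytic_on rho UNIV" and omega_an: "real_analytic_on omega UNIV"
    and rho_ode: "\<forall>y. y \<noteq> 0 \<and> 1 - y\<^sup>2 * (omega y)\<^sup>2 \<noteq> 0 \<longrightarrow>
        (rho has_real_derivative
           (- (2 * y * rho y * omega y * (rho y - omega y)) / (1 - y\<^sup>2 * (omega y)\<^sup>2))) (at y)"
    and omega_ode: "\<forall>y. y \<noteq> 0 \<and> 1 - y\<^sup>2 * (omega y)\<^sup>2 \<noteq> 0 \<longrightarrow>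
        (omega has_real_derivative
           ((1 - 3 * omega y) / y
            + (2 * y * (omega y)\<^sup>2 * (rho y - omega y)) / (1 - y\<^sup>2 * (omega y)\<^sup>2))) (at y)"
  shows "rho y * (3 * omega y + y * deriv omega y) + y * omega y * deriv rho y = rho y"
    and "(1 - y\<^sup>2 * (omega y)\<^sup>2) * (y * deriv omega y - 1 + 3 * omega y)
           = 2 * y\<^sup>2 * (omega y)\<^sup>2 * (rho y - omega y)"
proof -
  let ?R = "{y. y \<noteq> 0 \<and> 1 - y\<^sup>2 * (omega y)\<^sup>2 \<noteq> 0}"
  have continuous: "continuous_on UNIV rho" "continuous_on UNIV omega"
    "continuous_on UNIV (deriv rho)" "continuous_on UNIV (deriv omega)"
    using rho_an omega_an by (auto intro: real_analytic_on_continuous_on real_analytic_on_deriv)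
  note everywhere = eq_if_eq_on_LP_regular_points[OF omega_an]
  have deriv_rho: "deriv rho y = - (2 * y * rho y * omega y * (rho y - omega y)) / (1 - y\<^sup>2 * (omega y)\<^sup>2)"
    and deriv_omega: "deriv omega y = (1 - 3 * omega y) / y
            + (2 * y * (omega y)\<^sup>2 * (rho y - omega y)) / (1 - y\<^sup>2 * (omega y)\<^sup>2)"
    if "y \<in> ?R" for y
    using rho_ode omega_ode that DERIV_imp_deriv by blast+
  have rho_algebra: "r * (3 * w + y * ((1 - 3 * w) / y + 2 * y * w\<^sup>2 * (r - w) / D))
      + y * w * (- (2 * y * r * w * (r - w)) / D) = r"
    and omega_algebra: "D * (y * ((1 - 3 * w) / y + 2 * y * w\<^sup>2 * (r - w) / D) - 1 + 3 * w)
      = 2 * y\<^sup>2 * w\<^sup>2 * (r - w)"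
    if "y \<noteq> 0" "D \<noteq> 0" for y r w D :: real
    using that by (simp_all add: field_simps power2_eq_square)
  show "rho y * (3 * omega y + y * deriv omega y) + y * omega y * deriv rho y = rho y"
  proof (rule everywhere[of "\<lambda>y. rho y * (3 * omega y + y * deriv omega y) + y * omega y * deriv rho y"])
    show "continuous_on UNIV (\<lambda>y. rho y * (3 * omega y + y * deriv omega y) + y * omega y * deriv rho y - rho y)"
      by (intro continuous_intros continuous)
    fix y assume "y \<in> ?R"
    then show "rho y * (3 * omega y + y * deriv omega y) + y * omega y * deriv rho y = rho y"
      unfolding deriv_rho[OF \<open>y \<in> ?R\<close>] deriv_omega[OF \<open>y \<in> ?R\<close>] by (intro rho_algebra) auto
  qed
  show "(1 - y\<^sup>2 * (omega y)\<^sup>2) * (y * deriv omega y - 1 + 3 * omega y)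
          = 2 * y\<^sup>2 * (omega y)\<^sup>2 * (rho y - omega y)"
  proof (rule everywhere[of "\<lambda>y. (1 - y\<^sup>2 * (omega y)\<^sup>2) * (y * deriv omega y - 1 + 3 * omega y)"
        "\<lambda>y. 2 * y\<^sup>2 * (omega y)\<^sup>2 * (rho y - omega y)"])
    show "continuous_on UNIV (\<lambda>y. (1 - y\<^sup>2 * (omega y)\<^sup>2) * (y * deriv omega y - 1 + 3 * omega y)
        - 2 * y\<^sup>2 * (omega y)\<^sup>2 * (rho y - omega y))"
      by (intro continuous_intros continuous)
    fix y assume "y \<in> ?R"
    then show "(1 - y\<^sup>2 * (omega y)\<^sup>2) * (y * deriv omega y - 1 + 3 * omega y)
          = 2 * y\<^sup>2 * (omega y)\<^sup>2 * (rho y - omega y)"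
      unfolding deriv_omega[OF \<open>y \<in> ?R\<close>] by (intro omega_algebra) auto
  qed
qed

section \<open>The self-similar profile\<close>

lemma has_real_derivative_transform_pos:
  fixes f g :: "real \<Rightarrow> real"
  assumes "(f has_real_derivative D) (at z)" and "\<And>w. w > 0 \<Longrightarrow> f w = g w" and "z > 0"
  shows "(g has_real_derivative D) (at z)"
  by (rule has_field_derivative_transform_within_open[OF assms(1), of "{0<..}"]) (use assms in auto)

lemma pos_if_powr_mult_tendsto_1:
  fixes f :: "real \<Rightarrow> real"
  assumes mono: "mono_on {0<..} f" and lim: "((\<lambda>z. z powr a * f z) \<longlongrightarrow> 1) (at_right 0)"
    and "z > 0"
  shows "f z > 0"
proof -
  have "\<forall>\<^sub>F w in at_right 0. w powr a * f w > 0"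
    using order_tendstoD(1)[OF lim] by simp
  moreover have "\<forall>\<^sub>F w in at_right 0. 0 < w \<and> w < z"
    using \<open>z > 0\<close> by (intro eventually_at_rightI[of 0 z]) auto
  ultimately obtain w where "w powr a * f w > 0" "0 < w" "w < z"
    using eventually_happens'[OF trivial_limit_at_right_real eventually_conj] by blast
  then have "f w > 0" by (simp add: zero_less_mult_iff)
  also have "f w \<le> f z"
    using mono \<open>0 < w\<close> \<open>w < z\<close> by (auto intro: mono_onD)
  finally show ?thesis .
qed

lemma tendsto_0_if_powr_mult_tendsto_1:
  fixes f :: "real \<Rightarrow> real"
  assumes "a < 0" and lim: "((\<lambda>z. z powr a * f z) \<longlongrightarrow> 1) (at_right 0)"
  shows "(f \<longlongrightarrow> 0) (at_right 0)"
proof -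
  have "\<forall>\<^sub>F z in at_right (0::real). 0 \<le> z"
    by (rule eventually_mono[OF eventually_at_right_less]) simp
  then have "((\<lambda>z. z powr (- a)) \<longlongrightarrow> 0) (at_right 0)"
    using \<open>a < 0\<close> by (intro tendsto_zero_powrI tendsto_ident_at tendsto_const) auto
  from tendsto_mult[OF this lim]
  have "((\<lambda>z. z powr (- a) * (z powr a * f z)) \<longlongrightarrow> 0) (at_right 0)" by simp
  moreover have "\<forall>\<^sub>F z in at_right 0. z powr (- a) * (z powr a * f z) = f z"
  proof (rule eventually_at_rightI[of 0 1])
    fix z :: real assume "z \<in> {0<..<1}"
    then have "z powr (- a) * z powr a = 1" by (simp flip: powr_add)
    then show "z powr (- a) * (z powr a * f z) = f z" by (metis mult.assoc mult_1)
  qed simp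
  ultimately show ?thesis by (rule Lim_transform_eventually)
qed

locale LP_profile =
  fixes rho omega zeta :: "real \<Rightarrow> real"
  assumes rho_an: "real_analytic_on rho UNIV"
    and omega_an: "real_analytic_on omega UNIV"
    and rho_ode: "\<forall>y. y \<noteq> 0 \<and> 1 - y\<^sup>2 * (omega y)\<^sup>2 \<noteq> 0 \<longrightarrow>
        (rho has_real_derivative
           (- (2 * y * rho y * omega y * (rho y - omega y)) / (1 - y\<^sup>2 * (omega y)\<^sup>2))) (at y)"
    and omega_ode: "\<forall>y. y \<noteq> 0 \<and> 1 - y\<^sup>2 * (omega y)\<^sup>2 \<noteq> 0 \<longrightarrow>
        (omega has_real_derivative
           ((1 - 3 * omega y) / y
            + (2 * y * (omega y)\<^sup>2 * (rho y - omega y)) / (1 - y\<^sup>2 * (omega y)\<^sup>2))) (at y)"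
    and omega0: "omega 0 = 1/3"
    and rho0: "rho 0 > 1/3"
    and zeta_incr: "strict_mono_on {0<..} zeta"
    and zeta_ode: "\<forall>z>0. zeta differentiable (at z) \<and> z * deriv zeta z = zeta z * omega (zeta z)"
    and zeta_asym: "((\<lambda>z. z powr (-1/3) * zeta z) \<longlongrightarrow> 1) (at_right 0)"
begin

lemma omega_has_real_derivative: "(omega has_real_derivative deriv omega y) (at y)"
  using real_analytic_on_has_real_derivative[OF omega_an] by simp

lemma deriv_omega_has_real_derivative: "(deriv omega has_real_derivative deriv (deriv omega) y) (at y)"
  using real_analytic_on_has_real_derivative[OF real_analytic_on_deriv[OF omega_an]] by simp

lemma cube_moment_has_real_derivative:
  "((\<lambda>y. y ^ 3 * rho y * omega y) has_real_derivative y\<^sup>2 * rho y) (at y)"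
proof -
  have "((\<lambda>y. y ^ 3 * rho y * omega y) has_real_derivative
      (3 * y\<^sup>2 * rho y + y ^ 3 * deriv rho y) * omega y + y ^ 3 * rho y * deriv omega y) (at y)"
    using real_analytic_on_has_real_derivative[OF rho_an] omega_has_real_derivative
    by (auto intro!: derivative_eq_intros simp: power2_eq_square power3_eq_cube)
  also have "(3 * y\<^sup>2 * rho y + y ^ 3 * deriv rho y) * omega y + y ^ 3 * rho y * deriv omega y
      = y\<^sup>2 * (rho y * (3 * omega y + y * deriv omega y) + y * omega y * deriv rho y)"
    by (simp add: algebra_simps power2_eq_square power3_eq_cube)
  finally show ?thesis
    by (simp add: LP_ode_cleared(1)[OF rho_an omega_an rho_ode omega_ode])
qed

lemma deriv_zeta: "z > 0 \<Longrightarrow> deriv zeta z = zeta z * omega (zeta z) / z"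
  using zeta_ode by (simp add: field_simps)

lemma zeta_has_real_derivative: "z > 0 \<Longrightarrow> (zeta has_real_derivative deriv zeta z) (at z)"
  using zeta_ode DERIV_deriv_iff_real_differentiable by blast

lemma zeta_pos: "z > 0 \<Longrightarrow> zeta z > 0"
  using pos_if_powr_mult_tendsto_1[OF strict_mono_on_imp_mono_on[OF zeta_incr] zeta_asym] .

lemma zeta_first_integral:
  assumes "z > 0"
  shows "(zeta z) ^ 3 * rho (zeta z) * omega (zeta z) = rho 0 / 3 * z"
proof -
  define F where "F w = (zeta w) ^ 3 * rho (zeta w) * omega (zeta w) / w" for w
  have F_deriv: "(F has_real_derivative 0) (at w)" if "w > 0" for w
  proof -
    have "(F has_real_derivative
        ((zeta w)\<^sup>2 * rho (zeta w) * deriv zeta w * w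
          - (zeta w) ^ 3 * rho (zeta w) * omega (zeta w) * 1) / (w * w)) (at w)"
      unfolding F_def
      by (intro DERIV_divide DERIV_ident DERIV_chain2[OF cube_moment_has_real_derivative]
          zeta_has_real_derivative that) (use that in simp)
    then show ?thesis
      using that by (simp add: deriv_zeta power2_eq_square power3_eq_cube)
  qed
  have "\<exists>c. \<forall>w\<in>{0<..}. F w = c"
    by (rule has_field_derivative_zero_constant) (auto intro: has_field_derivative_at_within F_deriv)
  then obtain c where c: "\<And>w. w > 0 \<Longrightarrow> F w = c" by auto
  have "(zeta \<longlongrightarrow> 0) (at_right 0)"
    by (rule tendsto_0_if_powr_mult_tendsto_1[OF _ zeta_asym]) simp
  then have "((\<lambda>w. rho (zeta w)) \<longlongrightarrow> rho 0) (at_right 0)"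
    and "((\<lambda>w. omega (zeta w)) \<longlongrightarrow> omega 0) (at_right 0)"
    by (auto intro: isCont_tendsto_compose[OF real_analytic_on_isCont[OF rho_an UNIV_I]]
        isCont_tendsto_compose[OF real_analytic_on_isCont[OF omega_an UNIV_I]])
  then have "((\<lambda>w. (w powr (-1/3) * zeta w) ^ 3 * rho (zeta w) * omega (zeta w))
      \<longlongrightarrow> 1 ^ 3 * rho 0 * omega 0) (at_right 0)"
    by (intro tendsto_mult tendsto_power zeta_asym)
  moreover have "\<forall>\<^sub>F w in at_right 0. (w powr (-1/3) * zeta w) ^ 3 * rho (zeta w) * omega (zeta w) = c"
  proof (rule eventually_at_rightI[of 0 1])
    fix w :: real assume "w \<in> {0<..<1}"
    then have "(w powr (-1/3)) ^ 3 = w powr (-1)" by (simp add: powr_power)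
    also have "\<dots> = 1 / w" using \<open>w \<in> {0<..<1}\<close> by (simp add: powr_minus divide_inverse)
    finally have "(w powr (-1/3)) ^ 3 = 1 / w" .
    with c[of w] \<open>w \<in> {0<..<1}\<close>
    show "(w powr (-1/3) * zeta w) ^ 3 * rho (zeta w) * omega (zeta w) = c"
      by (simp add: F_def power_mult_distrib)
  qed simp
  ultimately have "((\<lambda>_. c) \<longlongrightarrow> 1 ^ 3 * rho 0 * omega 0) (at_right (0::real))"
    by (rule Lim_transform_eventually)
  then have "c = rho 0 / 3"
    by (simp add: tendsto_const_iff omega0)
  with c[OF assms] assms show ?thesis by (simp add: F_def field_simps)
qed

lemma deriv_zeta_pos:
  assumes "z > 0"
  shows "deriv zeta z > 0"
proof -
  have "deriv zeta z \<ge> 0"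
    using mono_on_imp_deriv_nonneg[OF strict_mono_on_imp_mono_on[OF zeta_incr]
        zeta_has_real_derivative[OF assms]] assms
    by (simp add: interior_open)
  moreover have "zeta z * omega (zeta z) \<noteq> 0"
    using zeta_first_integral[OF assms] rho0 assms by (auto simp: power3_eq_cube)
  then have "deriv zeta z \<noteq> 0"
    using deriv_zeta[OF assms] assms by simp
  ultimately show ?thesis by linarith
qed

lemma deriv_zeta_has_real_derivative:
  assumes "z > 0"
  shows "(deriv zeta has_real_derivative deriv (deriv zeta) z) (at z)"
    and "deriv (deriv zeta) z = deriv zeta z * (omega (zeta z) + zeta z * deriv omega (zeta z) - 1) / z"
proof -
  have "((\<lambda>w. zeta w * omega (zeta w) / w) has_real_derivative
      ((deriv zeta z * omega (zeta z) + deriv omega (zeta z) * deriv zeta z * zeta z) * z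
       - zeta z * omega (zeta z) * 1) / (z * z)) (at z)"
    using assms
    by (intro DERIV_divide DERIV_mult DERIV_ident zeta_has_real_derivative
        DERIV_chain2[OF omega_has_real_derivative]) auto
  then have "(deriv zeta has_real_derivative
      ((deriv zeta z * omega (zeta z) + deriv omega (zeta z) * deriv zeta z * zeta z) * z
       - zeta z * omega (zeta z) * 1) / (z * z)) (at z)"
    by (rule has_real_derivative_transform_pos) (simp_all add: deriv_zeta assms)
  then have D: "(deriv zeta has_real_derivative
      deriv zeta z * (omega (zeta z) + zeta z * deriv omega (zeta z) - 1) / z) (at z)"
    by (rule DERIV_cong) (use assms in \<open>simp add: deriv_zeta field_simps\<close>)
  then show "deriv (deriv zeta) z = deriv zeta z * (omega (zeta z) + zeta z * deriv omega (zeta z) - 1) / z"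
    by (rule DERIV_imp_deriv)
  with D show "(deriv zeta has_real_derivative deriv (deriv zeta) z) (at z)"
    by simp
qed

lemma deriv2_zeta_has_real_derivative:
  assumes "z > 0"
  shows "(deriv (deriv zeta) has_real_derivative deriv (deriv (deriv zeta)) z) (at z)"
proof -
  define Q where "Q w = deriv zeta w * (omega (zeta w) + zeta w * deriv omega (zeta w) - 1) / w" for w
  note zeta' = zeta_has_real_derivative[OF assms]
  obtain D where "(Q has_real_derivative D) (at z)"
    using DERIV_divide[OF DERIV_mult[OF deriv_zeta_has_real_derivative(1)[OF assms]
        DERIV_diff[OF DERIV_add[OF DERIV_chain2[OF omega_has_real_derivative zeta']
          DERIV_mult[OF zeta' DERIV_chain2[OF deriv_omega_has_real_derivative zeta']]] DERIV_const]]
        DERIV_ident] assms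
    unfolding Q_def by auto
  then have "(deriv (deriv zeta) has_real_derivative D) (at z)"
    by (rule has_real_derivative_transform_pos)
       (simp_all add: Q_def deriv_zeta_has_real_derivative(2) assms)
  then show ?thesis by (simp add: DERIV_imp_deriv)
qed

lemma profile_equation:
  assumes "z > 0"
  shows "(z\<^sup>2 - 1 / (deriv zeta z)\<^sup>2) * deriv (deriv zeta) z + 2/3 * rho 0 * z / (zeta z)\<^sup>2
           - 2 / zeta z = 0"
proof -
  define y where "y = zeta z"
  define w where "w = omega y"
  define w' where "w' = deriv omega y"
  define r where "r = rho y"
  have y: "y > 0" "y * w \<noteq> 0"
    using zeta_pos[OF assms] deriv_zeta_pos[OF assms] deriv_zeta[OF assms] assms
    by (auto simp: y_def w_def)
  have p: "deriv zeta z = y * w / z"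
    using deriv_zeta[OF assms] by (simp add: y_def w_def)
  have q: "deriv (deriv zeta) z = y * w / z * (w + y * w' - 1) / z"
    using deriv_zeta_has_real_derivative(2)[OF assms] by (simp add: p y_def w_def w'_def)
  have first_integral: "2/3 * rho 0 * z / y\<^sup>2 = 2 * y * r * w"
    using zeta_first_integral[OF assms] y
    by (simp add: y_def w_def r_def field_simps power2_eq_square power3_eq_cube)
  have cleared: "(y\<^sup>2 * w\<^sup>2 - 1) * (w + y * w' - 1) = 2 * w - 2 * y\<^sup>2 * w\<^sup>2 * r"
    using LP_ode_cleared(2)[OF rho_an omega_an rho_ode omega_ode, of y]
    by (simp add: w_def w'_def r_def algebra_simps power2_eq_square)
  have "(z\<^sup>2 - 1 / (deriv zeta z)\<^sup>2) * deriv (deriv zeta) z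
      = (y\<^sup>2 * w\<^sup>2 - 1) * (w + y * w' - 1) / (y * w)"
    unfolding p q using assms y by (simp add: field_simps power2_eq_square)
  also have "\<dots> = 2 / y - 2 * y * w * r"
    unfolding cleared using y by (simp add: field_simps power2_eq_square)
  finally show ?thesis
    unfolding y_def[symmetric] first_integral by simp
qed

lemma Lam_zeta_has_real_derivative:
  assumes "z > 0"
  shows "(Lam zeta has_real_derivative deriv zeta z + z * deriv (deriv zeta) z) (at z)"
  unfolding Lam_def[abs_def]
  by (rule DERIV_cong[OF DERIV_mult[OF DERIV_ident deriv_zeta_has_real_derivative(1)[OF assms]]]) simp

end

section \<open>The operators \<open>\<Lambda>\<close>, \<open>K\<close> and \<open>\<V>\<close>\<close>

text \<open>All weights are powers \<open>z\<^sup>k\<^sup>/\<^sup>3\<close>; writing \<open>z = c\<^sup>3\<close> turns them into rational functions of \<open>c\<close>.\<close>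

lemma real_cube_rootE:
  fixes z :: real
  assumes "z > 0"
  obtains c where "c > 0" and "z = c ^ 3"
proof (rule that)
  show "z powr (1/3) > 0" using assms by simp
  show "z = (z powr (1/3)) ^ 3" using assms by (simp add: powr_power)
qed

lemma powr_of_cube:
  fixes c r :: real
  assumes "c > 0"
  shows "(c ^ 3) powr r = c powr (3 * r)"
proof -
  have "c ^ 3 = c powr 3" using assms by (simp add: powr_numeral)
  then show ?thesis by (simp add: powr_powr)
qed

lemma powr_square_three_halves:
  fixes x :: real
  assumes "x \<ge> 0"
  shows "(x\<^sup>2) powr (3/2) = x ^ 3"
proof -
  have "(x\<^sup>2) powr (3/2) = (x powr 2) powr (3/2)" using assms by (simp add: powr_numeral)
  also have "\<dots> = x powr 3" by (simp add: powr_powr)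
  finally show ?thesis using assms by (simp add: powr_numeral)
qed

lemma has_real_derivative_powr_mult:
  fixes g :: "real \<Rightarrow> real"
  assumes "z > 0" and "(g has_real_derivative g') (at z)"
  shows "((\<lambda>w. w powr a * g w) has_real_derivative a * z powr (a - 1) * g z + z powr a * g') (at z)"
  using DERIV_mult[OF has_real_derivative_powr[OF assms(1)] assms(2)] by (simp add: mult.commute)

lemma Lam_eq: "(f has_real_derivative f') (at z) \<Longrightarrow> Lam f z = z * f'"
  by (simp add: Lam_def DERIV_imp_deriv)

lemma hatD_eq:
  fixes \<theta> :: "real \<Rightarrow> real"
  assumes "z > 0" and "(\<theta> has_real_derivative \<theta>') (at z)"
  shows "hatD \<theta> z = 2/3 * z powr (-1/3) * \<theta> z + z powr (2/3) * \<theta>'"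
  unfolding hatD_def using has_real_derivative_powr_mult[OF assms, of "2/3"]
  by (intro DERIV_imp_deriv) simp

lemma Ghat_eq:
  assumes "z > 0" and "(zeta has_real_derivative p) (at z)"
  shows "Ghat zeta z = (z powr (-2/3) / p)\<^sup>2"
proof -
  obtain c where "c > 0" "z = c ^ 3" using real_cube_rootE assms(1) .
  then show ?thesis
    unfolding Ghat_def hatd_def DERIV_imp_deriv[OF assms(2)]
    by (simp add: powr_of_cube powr_neg_numeral powr_numeral field_simps)
qed

lemma Kop_eq:
  fixes zeta \<theta> \<theta>' p :: "real \<Rightarrow> real"
  assumes z: "z > 0"
    and d\<theta>: "\<And>w. w > 0 \<Longrightarrow> (\<theta> has_real_derivative \<theta>' w) (at w)"
    and d\<theta>': "(\<theta>' has_real_derivative \<theta>'') (at z)"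
    and dzeta: "\<And>w. w > 0 \<Longrightarrow> (zeta has_real_derivative p w) (at w)"
    and dp: "(p has_real_derivative q) (at z)"
    and p0: "p z \<noteq> 0"
  shows "Kop zeta \<theta> z = \<theta>'' / (p z)\<^sup>2 - 2 * \<theta>' z * q / (p z)^3
           - 10/9 * \<theta> z / (z\<^sup>2 * (p z)\<^sup>2) - 4/3 * \<theta> z * q / (z * (p z)^3)"
proof -
  define H where "H w = w powr (-5/3) * (2/3 * \<theta> w / (p w)\<^sup>2) + w powr (-2/3) * (\<theta>' w / (p w)\<^sup>2)" for w
  define H' where "H' = -5/3 * z powr (-5/3 - 1) * (2/3 * \<theta> z / (p z)\<^sup>2)
        + z powr (-5/3) * (2/3 * (\<theta>' z * (p z)\<^sup>2 - \<theta> z * (2 * p z * q)) / ((p z)\<^sup>2)\<^sup>2)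
      + (-2/3 * z powr (-2/3 - 1) * (\<theta>' z / (p z)\<^sup>2)
        + z powr (-2/3) * ((\<theta>'' * (p z)\<^sup>2 - \<theta>' z * (2 * p z * q)) / ((p z)\<^sup>2)\<^sup>2))"
  have "(H has_real_derivative H') (at z)"
    unfolding H_def H'_def using p0
    by (intro DERIV_add has_real_derivative_powr_mult z)
       (auto intro!: derivative_eq_intros d\<theta>[OF z] d\<theta>' dp simp: field_simps)
  moreover have "H w = Ghat zeta w * hatD \<theta> w" if w: "w > 0" for w
  proof -
    obtain c where "c > 0" "w = c ^ 3" using real_cube_rootE w .
    then show ?thesis
      unfolding H_def Ghat_eq[OF w dzeta[OF w]] hatD_eq[OF w d\<theta>[OF w]]
      by (cases "p w = 0")
         (simp_all add: powr_of_cube powr_neg_numeral powr_numeral field_simps, simp add: eval_nat_numeral)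
  qed
  ultimately have "((\<lambda>w. Ghat zeta w * hatD \<theta> w) has_real_derivative H') (at z)"
    using z by (rule has_real_derivative_transform_pos)
  then have "Kop zeta \<theta> z = z powr (2/3) * H'"
    unfolding Kop_def hatd_def by (simp add: DERIV_imp_deriv)
  also have "\<dots> = \<theta>'' / (p z)\<^sup>2 - 2 * \<theta>' z * q / (p z)^3
           - 10/9 * \<theta> z / (z\<^sup>2 * (p z)\<^sup>2) - 4/3 * \<theta> z * q / (z * (p z)^3)"
  proof -
    obtain c where "c > 0" "z = c ^ 3" using real_cube_rootE z .
    then show ?thesis using p0 unfolding H'_def
      by (simp add: powr_of_cube powr_neg_numeral powr_numeral field_simps, simp add: eval_nat_numeral)
  qed
  finally show ?thesis .
qed

lemma Vpot_eq:
  fixes zeta p :: "real \<Rightarrow> real"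
  assumes z: "z > 0"
    and dzeta: "\<And>w. w > 0 \<Longrightarrow> (zeta has_real_derivative p w) (at w)"
    and dp: "(p has_real_derivative q) (at z)"
    and p0: "p z > 0" and zeta0: "zeta z > 0"
  shows "Vpot C zeta z = 10/9 / (z\<^sup>2 * (p z)\<^sup>2) + 4/3 * q / (z * (p z)^3)
           - 2 / (zeta z)\<^sup>2 + 2 * C * z / (zeta z)^3"
proof -
  have deriv_zeta: "deriv zeta w = p w" if "w > 0" for w
    using DERIV_imp_deriv dzeta that by blast
  have "((\<lambda>w. w powr (2/3) * p w) has_real_derivative 2/3 * z powr (2/3 - 1) * p z + z powr (2/3) * q) (at z)"
    using z dp by (rule has_real_derivative_powr_mult)
  then have "(hatd zeta has_real_derivative 2/3 * z powr (2/3 - 1) * p z + z powr (2/3) * q) (at z)"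
    by (rule has_real_derivative_transform_pos) (simp_all add: hatd_def deriv_zeta z)
  then have hatd2: "hatd (hatd zeta) z = z powr (2/3) * (2/3 * z powr (2/3 - 1) * p z + z powr (2/3) * q)"
    unfolding hatd_def[of "hatd zeta"] by (simp add: DERIV_imp_deriv)
  have Ghat32: "Ghat zeta z powr (3/2) = (z powr (-2/3) / p z) ^ 3"
    unfolding Ghat_eq[OF z dzeta[OF z]] using z p0 by (intro powr_square_three_halves) simp
  obtain c where "c > 0" "z = c ^ 3" using real_cube_rootE z .
  then show ?thesis
    unfolding Vpot_def hatd2 Ghat32 unfolding Ghat_eq[OF z dzeta[OF z]] using p0 zeta0
    by (simp add: powr_of_cube powr_neg_numeral powr_numeral field_simps, simp add: eval_nat_numeral)
qed

section \<open>The scaling generator is an eigenfunction\<close>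

lemma profile_equation_differentiated:
  fixes zeta p q :: "real \<Rightarrow> real"
  assumes z: "z > 0"
    and dzeta: "\<And>w. w > 0 \<Longrightarrow> (zeta has_real_derivative p w) (at w)"
    and dp: "\<And>w. w > 0 \<Longrightarrow> (p has_real_derivative q w) (at w)"
    and dq: "(q has_real_derivative s) (at z)"
    and zeta0: "zeta z \<noteq> 0" and p0: "p z \<noteq> 0"
    and profile: "\<And>w. w > 0 \<Longrightarrow> (w\<^sup>2 - 1 / (p w)\<^sup>2) * q w + C * w / (zeta w)\<^sup>2 - 2 / zeta w = 0"
  shows "(2 * z + 2 * q z / (p z) ^ 3) * q z + (z\<^sup>2 - 1 / (p z)\<^sup>2) * s + C / (zeta z)\<^sup>2
           - 2 * C * z * p z / (zeta z) ^ 3 + 2 * p z / (zeta z)\<^sup>2 = 0"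
proof -
  define E where "E w = (w\<^sup>2 - 1 / (p w)\<^sup>2) * q w + C * w / (zeta w)\<^sup>2 - 2 / zeta w" for w
  define E' where "E' = (2 * z - (- (2 * p z * q z) / ((p z)\<^sup>2)\<^sup>2)) * q z + (z\<^sup>2 - 1 / (p z)\<^sup>2) * s
        + (C * (zeta z)\<^sup>2 - C * z * (2 * zeta z * p z)) / ((zeta z)\<^sup>2)\<^sup>2 - (- (2 * p z) / (zeta z)\<^sup>2)"
  have "(E has_real_derivative E') (at z)"
    unfolding E_def E'_def using z zeta0 p0
    by (auto intro!: derivative_eq_intros dzeta dp dq simp: power2_eq_square)
  moreover have "(E has_real_derivative 0) (at z)"
    by (rule has_real_derivative_transform_pos[OF DERIV_const]) (simp_all add: E_def profile z)
  ultimately have "E' = 0"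
    by (rule DERIV_unique)
  moreover have "E' = (2 * z + 2 * q z / (p z) ^ 3) * q z + (z\<^sup>2 - 1 / (p z)\<^sup>2) * s + C / (zeta z)\<^sup>2
           - 2 * C * z * p z / (zeta z) ^ 3 + 2 * p z / (zeta z)\<^sup>2"
    unfolding E'_def using zeta0 p0 by (simp add: field_simps power2_eq_square power3_eq_cube)
  ultimately show ?thesis by simp
qed

lemma scaling_generator_residual:
  fixes z Z P Q S C :: real
  assumes "z \<noteq> 0" and "Z \<noteq> 0" and "P \<noteq> 0"
  shows "- (z * - (2 * z * Q + z\<^sup>2 * S))
      + (- (Q + z * S) / P\<^sup>2 - 2 * - (z * Q) * Q / P ^ 3
         - 10/9 * (Z - z * P) / (z\<^sup>2 * P\<^sup>2) - 4/3 * (Z - z * P) * Q / (z * P ^ 3))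
      + (10/9 / (z\<^sup>2 * P\<^sup>2) + 4/3 * Q / (z * P ^ 3) - 2 / Z\<^sup>2 + 2 * C * z / Z ^ 3) * (Z - z * P)
    = - (z\<^sup>2 * Q)
      + z * ((2 * z + 2 * Q / P ^ 3) * Q + (z\<^sup>2 - 1 / P\<^sup>2) * S + C / Z\<^sup>2
             - 2 * C * z * P / Z ^ 3 + 2 * P / Z\<^sup>2)
      + ((z\<^sup>2 - 1 / P\<^sup>2) * Q + C * z / Z\<^sup>2 - 2 / Z)"
  using assms by (simp add: field_simps power2_eq_square power3_eq_cube)

lemma Lop_scaling_generator:
  fixes zeta p q s :: "real \<Rightarrow> real"
  assumes z: "z > 0"
    and dzeta: "\<And>w. w > 0 \<Longrightarrow> (zeta has_real_derivative p w) (at w)"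
    and dp: "\<And>w. w > 0 \<Longrightarrow> (p has_real_derivative q w) (at w)"
    and dq: "\<And>w. w > 0 \<Longrightarrow> (q has_real_derivative s w) (at w)"
    and zeta_pos: "\<And>w. w > 0 \<Longrightarrow> zeta w > 0" and p_pos: "\<And>w. w > 0 \<Longrightarrow> p w > 0"
    and profile: "\<And>w. w > 0 \<Longrightarrow> (w\<^sup>2 - 1 / (p w)\<^sup>2) * q w + C * w / (zeta w)\<^sup>2 - 2 / zeta w = 0"
  defines "\<theta> \<equiv> \<lambda>w. zeta w - Lam zeta w" and "\<phi> \<equiv> \<lambda>w. Lam zeta w - Lam (Lam zeta) w"
  shows "fst (Lop C zeta (\<theta>, \<phi>)) z = \<theta> z" and "snd (Lop C zeta (\<theta>, \<phi>)) z = \<phi> z"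
proof -
  have p0: "p z > 0" and zeta0: "zeta z > 0"
    using p_pos zeta_pos z by auto
  then have p_ne0: "p z \<noteq> 0" by simp
  have Lam_zeta: "Lam zeta w = w * p w" if "w > 0" for w
    using Lam_eq[OF dzeta[OF that]] .
  have Lam_zeta_deriv: "(Lam zeta has_real_derivative p w + w * q w) (at w)" if w: "w > 0" for w
  proof -
    have "((\<lambda>w. w * p w) has_real_derivative p w + w * q w) (at w)"
      by (rule DERIV_cong[OF DERIV_mult[OF DERIV_ident dp[OF w]]]) simp
    then show ?thesis by (rule has_real_derivative_transform_pos) (simp_all add: Lam_zeta w)
  qed
  have \<phi>_eq: "\<phi> w = - (w\<^sup>2 * q w)" if "w > 0" for w
    using that unfolding \<phi>_def Lam_eq[OF Lam_zeta_deriv[OF that]]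
    by (simp add: Lam_zeta algebra_simps power2_eq_square)
  have \<theta>_eq: "\<theta> w = zeta w - w * p w" if "w > 0" for w
    using that by (simp add: \<theta>_def Lam_zeta)
  have d\<theta>: "(\<theta> has_real_derivative - (w * q w)) (at w)" if w: "w > 0" for w
  proof -
    have "((\<lambda>w. zeta w - w * p w) has_real_derivative - (w * q w)) (at w)"
      by (rule DERIV_cong[OF DERIV_diff[OF dzeta[OF w] DERIV_mult[OF DERIV_ident dp[OF w]]]]) simp
    then show ?thesis by (rule has_real_derivative_transform_pos) (simp_all add: \<theta>_eq w)
  qed
  have d\<theta>': "((\<lambda>w. - (w * q w)) has_real_derivative - (q z + z * s z)) (at z)"
    by (rule DERIV_cong[OF DERIV_minus[OF DERIV_mult[OF DERIV_ident dq[OF z]]]]) simp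
  have d\<phi>: "(\<phi> has_real_derivative - (2 * z * q z + z\<^sup>2 * s z)) (at z)"
  proof -
    have "((\<lambda>w. - (w\<^sup>2 * q w)) has_real_derivative - (2 * z * q z + z\<^sup>2 * s z)) (at z)"
      by (rule DERIV_cong[OF DERIV_minus[OF DERIV_mult[OF DERIV_power[OF DERIV_ident, of 2] dq[OF z]]]])
         (simp add: algebra_simps)
    then show ?thesis by (rule has_real_derivative_transform_pos) (simp_all add: \<phi>_eq z)
  qed
  show "fst (Lop C zeta (\<theta>, \<phi>)) z = \<theta> z"
    using Lam_eq[OF d\<theta>[OF z]] \<phi>_eq[OF z] by (simp add: Lop_def power2_eq_square)
  have "snd (Lop C zeta (\<theta>, \<phi>)) z = - Lam \<phi> z + Kop zeta \<theta> z + Vpot C zeta z * \<theta> z"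
    by (simp add: Lop_def)
  also have "\<dots> = - (z\<^sup>2 * q z)
      + z * ((2 * z + 2 * q z / (p z) ^ 3) * q z + (z\<^sup>2 - 1 / (p z)\<^sup>2) * s z + C / (zeta z)\<^sup>2
             - 2 * C * z * p z / (zeta z) ^ 3 + 2 * p z / (zeta z)\<^sup>2)
      + ((z\<^sup>2 - 1 / (p z)\<^sup>2) * q z + C * z / (zeta z)\<^sup>2 - 2 / zeta z)"
    using scaling_generator_residual[of z "zeta z" "p z" "q z" "s z" C] z zeta0 p0
    by (simp add: Lam_eq[OF d\<phi>] Kop_eq[OF z d\<theta> d\<theta>' dzeta dp[OF z] p_ne0]
        Vpot_eq[OF z dzeta dp[OF z] p0 zeta0] \<theta>_eq[OF z])
  also have "\<dots> = \<phi> z"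
    using profile_equation_differentiated[OF z dzeta dp dq[OF z] _ p_ne0 profile] zeta0
      profile[OF z] \<phi>_eq[OF z]
    by simp
  finally show "snd (Lop C zeta (\<theta>, \<phi>)) z = \<phi> z" .
qed

lemma scaling_orbit_has_real_derivative:
  assumes "(f has_real_derivative f') (at z)"
  shows "((\<lambda>T. inverse (T + 1) * f (z * (T + 1))) has_real_derivative z * f' - f z) (at 0)"
    and "((\<lambda>T. f (z * (T + 1))) has_real_derivative z * f') (at 0)"
proof -
  have "((\<lambda>T. z * (T + 1)) has_real_derivative z) (at 0)"
    by (auto intro!: derivative_eq_intros)
  from DERIV_chain'[OF this, of f f'] assms
  show f: "((\<lambda>T. f (z * (T + 1))) has_real_derivative z * f') (at 0)"
    by (simp add: mult.commute)
  have "((\<lambda>T. inverse (T + 1)) has_real_derivative -1) (at (0::real))"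
    by (auto intro!: derivative_eq_intros)
  from DERIV_mult[OF this f]
  show "((\<lambda>T. inverse (T + 1) * f (z * (T + 1))) has_real_derivative z * f' - f z) (at 0)"
    by simp
qed

theorem lemmaL:
  fixes rho omega zeta :: "real \<Rightarrow> real"
  assumes rho_an: "real_analytic_on rho UNIV"
    and omega_an: "real_analytic_on omega UNIV"
    and rho_even: "\<forall>y. rho (- y) = rho y"
    and omega_even: "\<forall>y. omega (- y) = omega y"
    and rho_ode: "\<forall>y. y \<noteq> 0 \<and> 1 - y\<^sup>2 * (omega y)\<^sup>2 \<noteq> 0 \<longrightarrow>
        (rho has_real_derivative
           (- (2 * y * rho y * omega y * (rho y - omega y)) / (1 - y\<^sup>2 * (omega y)\<^sup>2))) (at y)"
    and omega_ode: "\<forall>y. y \<noteq> 0 \<and> 1 - y\<^sup>2 * (omega y)\<^sup>2 \<noteq> 0 \<longrightarrow>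
        (omega has_real_derivative
           ((1 - 3 * omega y) / y
            + (2 * y * (omega y)\<^sup>2 * (rho y - omega y)) / (1 - y\<^sup>2 * (omega y)\<^sup>2))) (at y)"
    and omega0: "omega 0 = 1/3"
    and rho0: "rho 0 > 1/3"
    and zeta_incr: "strict_mono_on {0<..} zeta"
    and zeta_ode: "\<forall>z>0. zeta differentiable (at z) \<and> z * deriv zeta z = zeta z * omega (zeta z)"
    and zeta_asym: "((\<lambda>z. z powr (-1/3) * zeta z) \<longlongrightarrow> 1) (at_right 0)"
  defines "C_LP \<equiv> 2/3 * rho 0"
    and "GammaV \<equiv> ((\<lambda>z. zeta z - Lam zeta z), (\<lambda>z. Lam zeta z - Lam (Lam zeta) z))"
    and "mu \<equiv> (\<lambda>z. Lam zeta z - zeta z)"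
  shows "(\<forall>z>0. fst (Lop C_LP zeta GammaV) z = fst GammaV z
               \<and> snd (Lop C_LP zeta GammaV) z = snd GammaV z)
       \<and> (\<forall>z>0. ((\<lambda>T. inverse (T + 1) * zeta (z * (T + 1))) has_real_derivative (- fst GammaV z)) (at 0)
               \<and> ((\<lambda>T. mu (z * (T + 1))) has_real_derivative (- snd GammaV z)) (at 0))"
proof -
  interpret LP_profile rho omega zeta
    by (rule LP_profile.intro) fact+
  have eigen: "fst (Lop C_LP zeta GammaV) z = fst GammaV z \<and> snd (Lop C_LP zeta GammaV) z = snd GammaV z"
    if "z > 0" for z
    unfolding GammaV_def C_LP_def
    using Lop_scaling_generator[OF that zeta_has_real_derivative deriv_zeta_has_real_derivative(1)
        deriv2_zeta_has_real_derivative zeta_pos deriv_zeta_pos profile_equation]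
    by simp
  show ?thesis
  proof (intro conjI allI impI)
    fix z :: real assume z: "z > 0"
    show "fst (Lop C_LP zeta GammaV) z = fst GammaV z" "snd (Lop C_LP zeta GammaV) z = snd GammaV z"
      using eigen[OF z] by simp_all
    show "((\<lambda>T. inverse (T + 1) * zeta (z * (T + 1))) has_real_derivative - fst GammaV z) (at 0)"
      using scaling_orbit_has_real_derivative(1)[OF zeta_has_real_derivative[OF z]]
      by (simp add: GammaV_def Lam_def)
    have "(mu has_real_derivative z * deriv (deriv zeta) z) (at z)"
      unfolding mu_def
      using DERIV_diff[OF Lam_zeta_has_real_derivative[OF z] zeta_has_real_derivative[OF z]] by simp
    from scaling_orbit_has_real_derivative(2)[OF this]
    show "((\<lambda>T. mu (z * (T + 1))) has_real_derivative - snd GammaV z) (at 0)"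
      by (simp add: GammaV_def Lam_def DERIV_imp_deriv[OF Lam_zeta_has_real_derivative[OF z]] algebra_simps)
  qed
qed

end
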